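(* Let $n\ge2$ and $W=(w_{ij},\ 1\le j<i\le n)\in(\mathbb{R}_{>0})^{n(n-1)/2}$, and let $T^\triangle_n(W)=(t_{ij},\ 1\le j<i\le n)$. Then the map $(\log w_{ij},\ 1\le j<i\le n)\mapsto(\log t_{ij},\ 1\le j<i\le n)$ has Jacobian $\pm1$.
   Context: Triangular arrays are $X=(x_{ij},\ 1\le j<i\le n)$ of positive reals. Local maps: for $i\ge3$, $l_{i1}$ replaces $x_{i1}$ by $x_{i-1,1}x_{i1}$; for $2\le j$ with $j+1<i$, $l_{ij}$ replaces $(x_{i-1,j-1},x_{i-1,j},x_{i,j-1},x_{ij})=(a,b,c,d)$ by $(bc/(ab+ac),b,c,d(b+c))$, other entries unchanged. For $1\le j\le n-2$, $\rho^{\triangle,n}_j=l_{n-j+1,1}\circ l_{n-j+2,2}\circ\cdots\circ l_{n-1,j-1}\circ l_{nj}$. $r^\triangle_{n,n-1}$ replaces $x_{n,n-1}$ by $1/x_{n,n-1}$. With conventions $x_{i0}=1$, $x_{n+1,n-1}=1$: for $k=0,\dots,\lfloor n/2\rfloor-1$, $b^{\triangle,n}_{n-2k,n-2k-1}$ replaces $x_{n-2k,n-2k-1}$ by $x_{n-2k+1,n-2k-1}x_{n-2k,n-2k-2}/x_{n-2k,n-2k-1}$; for $k=1,\dots,\lfloor(n-1)/2\rfloor$, $b^{\triangle,n}_{n-2k+1,n-2k}$ is the identity. $\rho^{\triangle,n}_{n-1}=b^{\triangle,n}_{2,1}\circ\cdots\circ b^{\triangle,n}_{n,n-1}\circ r^\triangle_{n,n-1}$,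 $R^\triangle_n=\rho^{\triangle,n}_{n-1}\circ\cdots\circ\rho^{\triangle,n}_1$. $T^\triangle_2(x_{21})=x_{21}$ and for $n\ge3$, $T^\triangle_n(X_n)=R^\triangle_n$ applied to the array whose first $n-1$ rows are $T^\triangle_{n-1}(x_{ij},\ 1\le j<i\le n-1)$ and whose last row is $(x_{n1},\dots,x_{n,n-1})$. *)

theory Defs
  imports "HOL-Analysis.Analysis" "HOL-Combinatorics.Permutations"
begin

text \<open>Triangular arrays are represented as functions nat => nat => real; only the
entries x i j with 1 <= j < i <= n are meaningful.\<close>

definition tri :: "nat \<Rightarrow> (nat \<times> nat) set" where
  "tri n = {(i, j). 1 \<le> j \<and> j < i \<and> i \<le> n}"

definition lmap :: "nat \<Rightarrow> nat \<Rightarrow> (nat \<Rightarrow> nat \<Rightarrow> real) \<Rightarrow> (nat \<Rightarrow> nat \<Rightarrow> real)" where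
  "lmap i j X =
    (if j = 1 then (\<lambda>p q. if p = i \<and> q = 1 then X (i - 1) 1 * X i 1 else X p q)
     else (let a = X (i - 1) (j - 1); b = X (i - 1) j; c = X i (j - 1); d = X i j in
       (\<lambda>p q. if p = i - 1 \<and> q = j - 1 then b * c / (a * b + a * c)
              else if p = i \<and> q = j then d * (b + c)
              else X p q)))"

definition rho :: "nat \<Rightarrow> nat \<Rightarrow> (nat \<Rightarrow> nat \<Rightarrow> real) \<Rightarrow> (nat \<Rightarrow> nat \<Rightarrow> real)" where
  "rho n j X = foldr (\<lambda>k. lmap (n - j + k) k) [1..<j+1] X"

definition rmap :: "nat \<Rightarrow> (nat \<Rightarrow> nat \<Rightarrow> real) \<Rightarrow> (nat \<Rightarrow> nat \<Rightarrow> real)" where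
  "rmap n X = (\<lambda>p q. if p = n \<and> q = n - 1 then 1 / X n (n - 1) else X p q)"

text \<open>b^{tri,n}_{m,m-1} for m = n - 2k (k >= 0, m >= 2), using the conventions
x_{i0} = 1 and x_{n+1,n-1} = 1; for m = n - 2k + 1 it is the identity.\<close>
definition bmap :: "nat \<Rightarrow> nat \<Rightarrow> (nat \<Rightarrow> nat \<Rightarrow> real) \<Rightarrow> (nat \<Rightarrow> nat \<Rightarrow> real)" where
  "bmap n m X =
    (if even (n - m) then
      (\<lambda>p q. if p = m \<and> q = m - 1 then
                (if m = n then 1 else X (m + 1) (m - 1)) * (if m = 2 then 1 else X m (m - 2))
                / X m (m - 1)
             else X p q)
     else X)"

definition rho_last :: "nat \<Rightarrow> (nat \<Rightarrow> nat \<Rightarrow> real) \<Rightarrow> (nat \<Rightarrow> nat \<Rightarrow> real)" where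
  "rho_last n X = foldr (bmap n) [2..<n+1] (rmap n X)"

definition Rtri :: "nat \<Rightarrow> (nat \<Rightarrow> nat \<Rightarrow> real) \<Rightarrow> (nat \<Rightarrow> nat \<Rightarrow> real)" where
  "Rtri n X = rho_last n (fold (rho n) [1..<n-1] X)"

fun Ttri :: "nat \<Rightarrow> (nat \<Rightarrow> nat \<Rightarrow> real) \<Rightarrow> (nat \<Rightarrow> nat \<Rightarrow> real)" where
  "Ttri (Suc (Suc (Suc n))) X =
     Rtri (n + 3) (\<lambda>i j. if i \<le> n + 2 then Ttri (n + 2) (\<lambda>p q. if p \<le> n + 2 then X p q else 1) i j
                         else X i j)"
| "Ttri _ X = X"

definition logT :: "nat \<Rightarrow> (nat \<times> nat \<Rightarrow> real) \<Rightarrow> (nat \<times> nat \<Rightarrow> real)" where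
  "logT n u = (\<lambda>(i, j). ln (Ttri n (\<lambda>p q. exp (u (p, q))) i j))"

definition det_on :: "'a set \<Rightarrow> ('a \<Rightarrow> 'a \<Rightarrow> real) \<Rightarrow> real" where
  "det_on I M = (\<Sum>p | p permutes I. of_int (sign p) * (\<Prod>a\<in>I. M a (p a)))"

end

theory Submission
  imports Defs
begin

text \<open>In logarithmic coordinates every local map \<open>l\<^sub>i\<^sub>j\<close>, \<open>r\<close> and \<open>b\<close> is a composite of maps
that change a single coordinate \<open>x\<^sub>a\<close> into \<open>\<plusminus>x\<^sub>a + f\<close>, where \<open>f\<close> depends only on the other
coordinates: inverting an entry, multiplying it by another entry, and multiplying it by
\<open>b + c\<close> or by \<open>bc/(b + c)\<close> for two other entries \<open>b, c\<close>. The Jacobian matrix of such a map is the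
identity after scaling row \<open>a\<close> by \<open>\<plusminus>1\<close> and adding multiples of other rows to it, so by the
chain rule every composite has Jacobian determinant \<open>\<plusminus>1\<close>. Derivatives are taken along
differentiable curves, which gives a chain rule without a norm on the coordinate space.\<close>

section \<open>Leibniz determinants\<close>

lemma det_on_eq_rows:
  fixes M :: "'a \<Rightarrow> 'a \<Rightarrow> real"
  assumes fin: "finite I" and "a \<in> I" "c \<in> I" "a \<noteq> c" and eq: "M a = M c"
  shows "det_on I M = 0"
proof -
  define t where "t = Transposition.transpose a c"
  have t: "t permutes I" unfolding t_def using assms by (simp add: permutes_swap_id)
  have tt: "t \<circ> t = id" unfolding t_def by simp
  have M_t: "M (t x) = M x" for x unfolding t_def Transposition.transpose_def using eq by auto
  define f where "f p = of_int (sign p) * (\<Prod>x\<in>I. M x (p x))" for p :: "'a \<Rightarrow> 'a"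
  have f_swap: "f (p \<circ> t) = - f p" if p: "p permutes I" for p
  proof -
    have "(\<Prod>x\<in>I. M x (p (t x))) = (\<Prod>x\<in>I. M (t x) (p (t (t x))))"
      using prod.reindex_bij_betw[OF permutes_imp_bij[OF t], of "\<lambda>x. M x (p (t x))"] by simp
    also have "\<dots> = (\<Prod>x\<in>I. M x (p x))"
      using tt by (simp add: M_t pointfree_idE)
    finally have prod: "(\<Prod>x\<in>I. M x (p (t x))) = (\<Prod>x\<in>I. M x (p x))" .
    have "sign (p \<circ> t) = sign p * sign t"
      using p t fin by (auto intro!: sign_compose simp: permutation_permutes)
    also have "sign t = -1" unfolding t_def using assms by (simp add: sign_swap_id)
    finally have "sign (p \<circ> t) = - sign p" by (simp only: mult_minus1_right)
    then show ?thesis unfolding f_def comp_apply prod by simp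
  qed
  have "det_on I M = sum f {p. p permutes I}" unfolding det_on_def f_def by simp
  also have "\<dots> = sum (\<lambda>p. f (p \<circ> t)) {p. p permutes I}"
    by (rule sum.reindex_bij_witness[where i="\<lambda>p. p \<circ> t" and j="\<lambda>p. p \<circ> t"])
      (use tt t in \<open>auto simp: o_assoc[symmetric] permutes_compose\<close>)
  also have "\<dots> = - sum f {p. p permutes I}"
    using f_swap by (simp add: sum_negf)
  finally show ?thesis unfolding det_on_def f_def by simp
qed

lemma det_on_delta:
  assumes fin: "finite I"
  shows "det_on I (\<lambda>a b. if a = b then 1 else 0) = 1"
proof -
  have "of_int (sign p) * (\<Prod>x\<in>I. if x = p x then 1 else 0) = (if p = id then 1 else (0::real))"
    if p: "p permutes I" for p
  proof (cases "p = id")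
    case False
    then obtain x where "p x \<noteq> x" by (auto simp: fun_eq_iff)
    moreover from this p have "x \<in> I" using permutes_not_in by metis
    ultimately have "(\<Prod>x\<in>I. if x = p x then 1 else (0::real)) = 0"
      using fin by (metis (mono_tags, lifting) prod_zero_iff)
    with False show ?thesis by simp
  qed simp
  then have "det_on I (\<lambda>a b. if a = b then 1 else 0) = (\<Sum>p | p permutes I. if p = id then 1 else 0)"
    unfolding det_on_def by (intro sum.cong) auto
  also have "\<dots> = 1" by (simp add: finite_permutations[OF fin])
  finally show ?thesis .
qed

lemma det_on_add_row_combination:
  fixes M :: "'a \<Rightarrow> 'a \<Rightarrow> real"
  assumes fin: "finite I" and a: "a \<in> I" and C: "C \<subseteq> I" "a \<notin> C"
  shows "det_on I (\<lambda>x b. if x = a then s * M a b + (\<Sum>c\<in>C. \<beta> c * M c b) else M x b)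
         = s * det_on I M"
proof -
  define D where "D R = (\<Sum>p | p permutes I. of_int (sign p) * (R (p a) * (\<Prod>x\<in>I-{a}. M x (p x))))"
    for R
  have row_a: "det_on I (\<lambda>x b. if x = a then R b else M x b) = D R" for R
    unfolding det_on_def D_def
  proof (rule sum.cong[OF refl])
    fix p
    have "(\<Prod>x\<in>I. if x = a then R (p x) else M x (p x))
          = R (p a) * (\<Prod>x\<in>I-{a}. if x = a then R (p x) else M x (p x))"
      by (subst prod.remove[OF fin a]) simp
    also have "(\<Prod>x\<in>I-{a}. if x = a then R (p x) else M x (p x)) = (\<Prod>x\<in>I-{a}. M x (p x))"
      by (rule prod.cong) auto
    finally show "of_int (sign p) * (\<Prod>x\<in>I. if x = a then R (p x) else M x (p x)) =
       of_int (sign p) * (R (p a) * (\<Prod>x\<in>I-{a}. M x (p x)))" by simp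
  qed
  have linear: "D (\<lambda>b. s * M a b + (\<Sum>c\<in>C. \<beta> c * M c b)) = s * D (M a) + (\<Sum>c\<in>C. \<beta> c * D (M c))"
    unfolding D_def
    by (simp add: algebra_simps sum.distrib sum_distrib_left sum_distrib_right sum.swap[of _ C])
  have "(\<lambda>x b. if x = a then M a b else M x b) = M" by (auto simp: fun_eq_iff)
  then have "D (M a) = det_on I M"
    using row_a[of "M a"] by simp
  moreover have "D (M c) = 0" if "c \<in> C" for c
    using row_a[of "M c"] det_on_eq_rows[OF fin a, of c "\<lambda>x b. if x = a then M c b else M x b"]
      that C by auto
  ultimately show ?thesis
    using row_a linear by simp
qed

section \<open>Jacobians in logarithmic coordinates\<close>

type_synonym tarray = "nat \<Rightarrow> nat \<Rightarrow> real"
type_synonym coords = "nat \<times> nat \<Rightarrow> real"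

definition log_map :: "(tarray \<Rightarrow> tarray) \<Rightarrow> coords \<Rightarrow> coords" where
  "log_map F u = (\<lambda>(i, j). ln (F (\<lambda>p q. exp (u (p, q))) i j))"

definition positive_array :: "tarray \<Rightarrow> bool" where
  "positive_array X \<longleftrightarrow> (\<forall>p q. 0 < X p q)"

definition has_curve_jacobian :: "(coords \<Rightarrow> coords) \<Rightarrow> (coords \<Rightarrow> coords \<Rightarrow> coords) \<Rightarrow> bool" where
  "has_curve_jacobian G J \<longleftrightarrow> (\<forall>\<gamma> \<gamma>' t.
     (\<forall>c. ((\<lambda>s. \<gamma> s c) has_real_derivative \<gamma>' c) (at t)) \<longrightarrow>
     (\<forall>a. ((\<lambda>s. G (\<gamma> s) a) has_real_derivative J (\<gamma> t) \<gamma>' a) (at t)))"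

definition jacobian_matrix :: "(coords \<Rightarrow> coords \<Rightarrow> coords) \<Rightarrow> coords \<Rightarrow> nat \<times> nat \<Rightarrow> nat \<times> nat \<Rightarrow> real"
  where "jacobian_matrix J v = (\<lambda>a b. J v (\<lambda>c. if c = b then 1 else 0) a)"

definition log_unimodular :: "(nat \<times> nat) set \<Rightarrow> (tarray \<Rightarrow> tarray) \<Rightarrow> bool" where
  "log_unimodular I F \<longleftrightarrow> (\<forall>X. positive_array X \<longrightarrow> positive_array (F X)) \<and>
     (\<exists>J. has_curve_jacobian (log_map F) J \<and> (\<forall>v. \<bar>det_on I (jacobian_matrix J v)\<bar> = 1))"

lemma has_curve_jacobian_comp:
  assumes "has_curve_jacobian G JG" "has_curve_jacobian H JH"
  shows "has_curve_jacobian (\<lambda>v. H (G v)) (\<lambda>v w. JH (G v) (JG v w))"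
  unfolding has_curve_jacobian_def
proof (intro allI impI)
  fix \<gamma> :: "real \<Rightarrow> coords" and \<gamma>' t a
  assume "\<forall>c. ((\<lambda>s. \<gamma> s c) has_real_derivative \<gamma>' c) (at t)"
  then have "\<forall>c. ((\<lambda>s. G (\<gamma> s) c) has_real_derivative JG (\<gamma> t) \<gamma>' c) (at t)"
    using assms(1) unfolding has_curve_jacobian_def by blast
  then show "((\<lambda>s. H (G (\<gamma> s)) a) has_real_derivative JH (G (\<gamma> t)) (JG (\<gamma> t) \<gamma>') a) (at t)"
    using assms(2)[unfolded has_curve_jacobian_def, rule_format, of "\<lambda>s. G (\<gamma> s)"] by blast
qed

lemma log_map_comp:
  assumes "\<forall>X. positive_array X \<longrightarrow> positive_array (F X)"
  shows "log_map (\<lambda>X. E (F X)) v = log_map E (log_map F v)"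
proof -
  have "positive_array (F (\<lambda>p q. exp (v (p, q))))"
    using assms by (simp add: positive_array_def)
  then have "(\<lambda>p q. exp (log_map F v (p, q))) = F (\<lambda>p q. exp (v (p, q)))"
    by (auto simp: log_map_def positive_array_def fun_eq_iff)
  then show ?thesis by (simp add: log_map_def)
qed

lemma log_unimodular_id:
  assumes "finite I"
  shows "log_unimodular I (\<lambda>X. X)"
proof -
  have "log_map (\<lambda>X. X) = (\<lambda>v. v)" by (auto simp: log_map_def fun_eq_iff)
  then have "has_curve_jacobian (log_map (\<lambda>X. X)) (\<lambda>v w. w)"
    unfolding has_curve_jacobian_def by simp
  moreover have "jacobian_matrix (\<lambda>v w. w) v = (\<lambda>a b. if a = b then 1 else 0)" for v
    by (auto simp: jacobian_matrix_def fun_eq_iff)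
  ultimately show ?thesis
    unfolding log_unimodular_def using det_on_delta[OF assms] by auto
qed

lemma has_curve_jacobian_update:
  assumes log_E: "\<And>v. log_map E v = v(a := \<psi> v)"
    and deriv_\<psi>: "\<And>\<gamma> \<gamma>' t. \<forall>c. ((\<lambda>s. \<gamma> s c) has_real_derivative \<gamma>' c) (at t) \<Longrightarrow>
        ((\<lambda>s. \<psi> (\<gamma> s)) has_real_derivative (\<sigma> * \<gamma>' a + (\<Sum>c\<in>C. \<beta> (\<gamma> t) c * \<gamma>' c))) (at t)"
  shows "has_curve_jacobian (log_map E) (\<lambda>v w. w(a := \<sigma> * w a + (\<Sum>c\<in>C. \<beta> v c * w c)))"
  unfolding has_curve_jacobian_def log_E
proof (intro allI impI)
  fix \<gamma> :: "real \<Rightarrow> coords" and \<gamma>' t x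
  assume \<gamma>: "\<forall>c. ((\<lambda>s. \<gamma> s c) has_real_derivative \<gamma>' c) (at t)"
  show "((\<lambda>s. ((\<gamma> s)(a := \<psi> (\<gamma> s))) x) has_real_derivative
      (\<gamma>'(a := \<sigma> * \<gamma>' a + (\<Sum>c\<in>C. \<beta> (\<gamma> t) c * \<gamma>' c))) x) (at t)"
    using deriv_\<psi>[OF \<gamma>] \<gamma>[rule_format, of x] by (cases "x = a") simp_all
qed

lemma log_unimodular_shear:
  assumes F: "log_unimodular I F" and fin: "finite I"
    and pos_E: "\<forall>X. positive_array X \<longrightarrow> positive_array (E X)"
    and a: "a \<in> I" and C: "C \<subseteq> I" "a \<notin> C" and \<sigma>: "\<bar>\<sigma>\<bar> = 1"
    and jac_E: "has_curve_jacobian (log_map E) (\<lambda>v w. w(a := \<sigma> * w a + (\<Sum>c\<in>C. \<beta> v c * w c)))"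
  shows "log_unimodular I (\<lambda>X. E (F X))"
proof -
  obtain JF where pos_F: "\<forall>X. positive_array X \<longrightarrow> positive_array (F X)"
    and jac_F: "has_curve_jacobian (log_map F) JF"
    and det_F: "\<And>v. \<bar>det_on I (jacobian_matrix JF v)\<bar> = 1"
    using F unfolding log_unimodular_def by blast
  define J where
    "J v w = (JF v w)(a := \<sigma> * JF v w a + (\<Sum>c\<in>C. \<beta> (log_map F v) c * JF v w c))" for v w
  have "log_map (\<lambda>X. E (F X)) = (\<lambda>v. log_map E (log_map F v))"
    using log_map_comp[OF pos_F] by blast
  then have jac: "has_curve_jacobian (log_map (\<lambda>X. E (F X))) J"
    unfolding J_def using has_curve_jacobian_comp[OF jac_F jac_E] by simp
  have "det_on I (jacobian_matrix J v) = \<sigma> * det_on I (jacobian_matrix JF v)" for v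
  proof -
    have "jacobian_matrix J v = (\<lambda>x b. if x = a
            then \<sigma> * jacobian_matrix JF v a b + (\<Sum>c\<in>C. \<beta> (log_map F v) c * jacobian_matrix JF v c b)
            else jacobian_matrix JF v x b)"
      by (auto simp: J_def jacobian_matrix_def fun_eq_iff)
    then show ?thesis
      using det_on_add_row_combination[OF fin a C] by simp
  qed
  then show ?thesis
    unfolding log_unimodular_def using pos_E pos_F jac det_F \<sigma> by (auto simp: abs_mult)
qed

section \<open>Elementary entry operations\<close>

definition entry_inv :: "nat \<times> nat \<Rightarrow> tarray \<Rightarrow> tarray" where
  "entry_inv a X = (\<lambda>p q. if (p, q) = a then 1 / X p q else X p q)"

definition entry_mul :: "nat \<times> nat \<Rightarrow> nat \<times> nat \<Rightarrow> tarray \<Rightarrow> tarray" where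
  "entry_mul a b X = (\<lambda>p q. if (p, q) = a then X p q * case_prod X b else X p q)"

definition entry_mul_sum :: "nat \<times> nat \<Rightarrow> nat \<times> nat \<Rightarrow> nat \<times> nat \<Rightarrow> tarray \<Rightarrow> tarray" where
  "entry_mul_sum a b c X =
     (\<lambda>p q. if (p, q) = a then X p q * (case_prod X b + case_prod X c) else X p q)"

definition entry_mul_parallel :: "nat \<times> nat \<Rightarrow> nat \<times> nat \<Rightarrow> nat \<times> nat \<Rightarrow> tarray \<Rightarrow> tarray" where
  "entry_mul_parallel a b c X =
     (\<lambda>p q. if (p, q) = a then X p q * (case_prod X b * case_prod X c / (case_prod X b + case_prod X c))
            else X p q)"

lemma exp_add_exp_neq_0 [simp]: "exp x + exp y \<noteq> (0::real)"
  by (metis add_pos_pos exp_gt_zero less_irrefl)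

lemma has_real_derivative_ln_exp_add:
  assumes "\<forall>c. ((\<lambda>s. \<gamma> s c) has_real_derivative \<gamma>' c) (at t)"
  shows "((\<lambda>s. ln (exp (\<gamma> s b) + exp (\<gamma> s c))) has_real_derivative
     exp (\<gamma> t b) / (exp (\<gamma> t b) + exp (\<gamma> t c)) * \<gamma>' b
     + exp (\<gamma> t c) / (exp (\<gamma> t b) + exp (\<gamma> t c)) * \<gamma>' c) (at t)"
  using assms by (auto intro!: derivative_eq_intros simp: add_pos_pos add_divide_distrib)

lemma log_unimodular_entry_inv:
  assumes "log_unimodular I F" "finite I" "a \<in> I"
  shows "log_unimodular I (\<lambda>X. entry_inv a (F X))"
proof (rule log_unimodular_shear[OF assms(1,2), where C="{}" and \<sigma>="-1" and \<beta>="\<lambda>v c. 0"])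
  show "has_curve_jacobian (log_map (entry_inv a)) (\<lambda>v w. w(a := - 1 * w a + (\<Sum>c\<in>{}. 0 * w c)))"
  proof (rule has_curve_jacobian_update[where \<psi>="\<lambda>v. - v a"])
    show "log_map (entry_inv a) v = v(a := - v a)" for v
      by (auto simp: log_map_def entry_inv_def fun_eq_iff ln_div)
    show "((\<lambda>s. - \<gamma> s a) has_real_derivative - 1 * \<gamma>' a + (\<Sum>c\<in>{}. 0 * \<gamma>' c)) (at t)"
      if "\<forall>c. ((\<lambda>s. \<gamma> s c) has_real_derivative \<gamma>' c) (at t)" for \<gamma> \<gamma>' t
      using DERIV_minus[OF that[rule_format, of a]] by simp
  qed
qed (use assms in \<open>auto simp: positive_array_def entry_inv_def\<close>)

lemma log_unimodular_entry_mul: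
  assumes "log_unimodular I F" "finite I" "a \<in> I" "b \<in> I" "a \<noteq> b"
  shows "log_unimodular I (\<lambda>X. entry_mul a b (F X))"
proof (rule log_unimodular_shear[OF assms(1,2), where C="{b}" and \<sigma>=1 and \<beta>="\<lambda>v c. 1"])
  show "has_curve_jacobian (log_map (entry_mul a b)) (\<lambda>v w. w(a := 1 * w a + (\<Sum>c\<in>{b}. 1 * w c)))"
  proof (rule has_curve_jacobian_update[where \<psi>="\<lambda>v. v a + v b"])
    show "log_map (entry_mul a b) v = v(a := v a + v b)" for v
      by (auto simp: log_map_def entry_mul_def fun_eq_iff exp_add[symmetric] split: prod.splits)
    show "((\<lambda>s. \<gamma> s a + \<gamma> s b) has_real_derivative 1 * \<gamma>' a + (\<Sum>c\<in>{b}. 1 * \<gamma>' c)) (at t)"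
      if "\<forall>c. ((\<lambda>s. \<gamma> s c) has_real_derivative \<gamma>' c) (at t)" for \<gamma> \<gamma>' t
      using DERIV_add[OF that[rule_format, of a] that[rule_format, of b]] by simp
  qed
qed (use assms in \<open>auto simp: positive_array_def entry_mul_def split: prod.splits\<close>)

lemma log_unimodular_entry_mul_sum:
  assumes "log_unimodular I F" "finite I" "a \<in> I" "b \<in> I" "c \<in> I" "a \<noteq> b" "a \<noteq> c" "b \<noteq> c"
  shows "log_unimodular I (\<lambda>X. entry_mul_sum a b c (F X))"
proof (rule log_unimodular_shear[OF assms(1,2), where C="{b, c}" and \<sigma>=1
      and \<beta>="\<lambda>v x. exp (v x) / (exp (v b) + exp (v c))"])
  show "has_curve_jacobian (log_map (entry_mul_sum a b c))
     (\<lambda>v w. w(a := 1 * w a + (\<Sum>x\<in>{b, c}. exp (v x) / (exp (v b) + exp (v c)) * w x)))"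
  proof (rule has_curve_jacobian_update[where \<psi>="\<lambda>v. v a + ln (exp (v b) + exp (v c))"])
    show "log_map (entry_mul_sum a b c) v = v(a := v a + ln (exp (v b) + exp (v c)))" for v
      by (auto simp: log_map_def entry_mul_sum_def fun_eq_iff ln_mult add_pos_pos split: prod.splits)
    show "((\<lambda>s. \<gamma> s a + ln (exp (\<gamma> s b) + exp (\<gamma> s c))) has_real_derivative
        1 * \<gamma>' a + (\<Sum>x\<in>{b, c}. exp (\<gamma> t x) / (exp (\<gamma> t b) + exp (\<gamma> t c)) * \<gamma>' x)) (at t)"
      if "\<forall>c. ((\<lambda>s. \<gamma> s c) has_real_derivative \<gamma>' c) (at t)" for \<gamma> \<gamma>' t
      using DERIV_add[OF that[rule_format, of a] has_real_derivative_ln_exp_add[OF that]] assms(8)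
      by simp
  qed
qed (use assms in \<open>auto simp: positive_array_def entry_mul_sum_def add_pos_pos split: prod.splits\<close>)

lemma log_unimodular_entry_mul_parallel:
  assumes "log_unimodular I F" "finite I" "a \<in> I" "b \<in> I" "c \<in> I" "a \<noteq> b" "a \<noteq> c" "b \<noteq> c"
  shows "log_unimodular I (\<lambda>X. entry_mul_parallel a b c (F X))"
proof (rule log_unimodular_shear[OF assms(1,2), where C="{b, c}" and \<sigma>=1
      and \<beta>="\<lambda>v x. 1 - exp (v x) / (exp (v b) + exp (v c))"])
  show "has_curve_jacobian (log_map (entry_mul_parallel a b c))
     (\<lambda>v w. w(a := 1 * w a + (\<Sum>x\<in>{b, c}. (1 - exp (v x) / (exp (v b) + exp (v c))) * w x)))"
  proof (rule has_curve_jacobian_update[where \<psi>="\<lambda>v. v a + (v b + v c - ln (exp (v b) + exp (v c)))"])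
    show "log_map (entry_mul_parallel a b c) v = v(a := v a + (v b + v c - ln (exp (v b) + exp (v c))))"
      for v
      by (auto simp: log_map_def entry_mul_parallel_def fun_eq_iff ln_mult ln_div add_pos_pos
          exp_add[symmetric] split: prod.splits)
    show "((\<lambda>s. \<gamma> s a + (\<gamma> s b + \<gamma> s c - ln (exp (\<gamma> s b) + exp (\<gamma> s c)))) has_real_derivative
        1 * \<gamma>' a + (\<Sum>x\<in>{b, c}. (1 - exp (\<gamma> t x) / (exp (\<gamma> t b) + exp (\<gamma> t c))) * \<gamma>' x)) (at t)"
      if d: "\<forall>c. ((\<lambda>s. \<gamma> s c) has_real_derivative \<gamma>' c) (at t)" for \<gamma> \<gamma>' t
      using DERIV_add[OF d[rule_format, of a] DERIV_diff[OF DERIV_add[OF d[rule_format, of b]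
          d[rule_format, of c]] has_real_derivative_ln_exp_add[OF d]]] assms(8)
      by (simp add: algebra_simps)
  qed
qed (use assms in \<open>auto simp: positive_array_def entry_mul_parallel_def add_pos_pos split: prod.splits\<close>)

section \<open>The local maps are log-unimodular\<close>

lemma tri_iff [simp]: "(p, q) \<in> tri N \<longleftrightarrow> 1 \<le> q \<and> q < p \<and> p \<le> N"
  by (simp add: tri_def)

lemma finite_tri: "finite (tri N)"
  by (rule finite_subset[of _ "{0..N} \<times> {0..N}"]) auto

lemma lmap_1: "lmap i 1 X = entry_mul (i, 1) (i - 1, 1) X"
  by (auto simp: lmap_def entry_mul_def fun_eq_iff)

text \<open>For \<open>j \<ge> 2\<close>: \<open>bc/(ab + ac) = a\<^sup>-\<^sup>1 \<cdot> bc/(b + c)\<close>, and \<open>b, c\<close> are untouched when \<open>a\<close> changes.\<close>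

lemma lmap_eq_entry_ops:
  assumes "2 \<le> j" "1 \<le> i"
  shows "lmap i j X = entry_mul_sum (i, j) (i - 1, j) (i, j - 1)
           (entry_mul_parallel (i - 1, j - 1) (i - 1, j) (i, j - 1) (entry_inv (i - 1, j - 1) X))"
proof -
  let ?a = "X (i - 1) (j - 1)" and ?b = "X (i - 1) j" and ?c = "X i (j - 1)"
  have "?b * ?c / (?a * ?b + ?a * ?c) = 1 / ?a * (?b * ?c / (?b + ?c))"
    by (simp add: distrib_left[symmetric])
  then show ?thesis
    using assms by (auto simp: lmap_def Let_def entry_mul_sum_def entry_mul_parallel_def
        entry_inv_def fun_eq_iff)
qed

lemma log_unimodular_lmap:
  assumes F: "log_unimodular (tri N) F"
    and ij: "1 \<le> j" "j < i" "i \<le> N" "j = 1 \<longrightarrow> 3 \<le> i" "2 \<le> j \<longrightarrow> j + 1 < i"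
  shows "log_unimodular (tri N) (\<lambda>X. lmap i j (F X))"
proof (cases "j = 1")
  case True
  then show ?thesis
    unfolding True lmap_1 using ij by (intro log_unimodular_entry_mul[OF F finite_tri]) auto
next
  case False
  with ij have j: "2 \<le> j" and "1 \<le> i" by simp_all
  show ?thesis
    unfolding lmap_eq_entry_ops[OF j \<open>1 \<le> i\<close>] using j ij
    by (intro log_unimodular_entry_mul_sum log_unimodular_entry_mul_parallel
        log_unimodular_entry_inv F finite_tri) auto
qed

lemma log_unimodular_foldr:
  assumes "\<And>k F. k \<in> set xs \<Longrightarrow> log_unimodular I F \<Longrightarrow> log_unimodular I (\<lambda>X. g k (F X))"
    and "log_unimodular I F"
  shows "log_unimodular I (\<lambda>X. foldr g xs (F X))"
  using assms by (induction xs) auto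

lemma log_unimodular_fold:
  assumes "\<And>k F. k \<in> set xs \<Longrightarrow> log_unimodular I F \<Longrightarrow> log_unimodular I (\<lambda>X. g k (F X))"
    and "log_unimodular I F"
  shows "log_unimodular I (\<lambda>X. fold g xs (F X))"
  using assms
proof (induction xs arbitrary: F)
  case (Cons k xs)
  then have "log_unimodular I (\<lambda>X. fold g xs (g k (F X)))"
    by (intro Cons.IH) auto
  then show ?case by simp
qed simp

lemma log_unimodular_rho:
  assumes "log_unimodular (tri N) F" "1 \<le> j" "j + 2 \<le> n" "n \<le> N"
  shows "log_unimodular (tri N) (\<lambda>X. rho n j (F X))"
  unfolding rho_def using assms
  by (intro log_unimodular_foldr log_unimodular_lmap) auto

text \<open>The conventions \<open>x\<^sub>n\<^sub>+\<^sub>1\<^sub>,\<^sub>n\<^sub>-\<^sub>1 = x\<^sub>m\<^sub>0 = 1\<close> make two of the factors of \<open>b\<close> optional.\<close>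

lemma bmap_eq_entry_ops:
  assumes "2 \<le> m" "even (n - m)"
  shows "bmap n m X =
    (let Y = entry_inv (m, m - 1) X;
         Z = (if m = n then Y else entry_mul (m, m - 1) (m + 1, m - 1) Y)
     in if m = 2 then Z else entry_mul (m, m - 1) (m, m - 2) Z)"
  using assms by (auto simp: bmap_def Let_def entry_inv_def entry_mul_def fun_eq_iff)

lemma log_unimodular_bmap:
  assumes F: "log_unimodular (tri N) F" and m: "2 \<le> m" "m \<le> n" "n \<le> N"
  shows "log_unimodular (tri N) (\<lambda>X. bmap n m (F X))"
proof (cases "even (n - m)")
  case True
  have inv: "log_unimodular (tri N) (\<lambda>X. entry_inv (m, m - 1) (F X))"
    using m by (intro log_unimodular_entry_inv[OF F finite_tri]) auto
  have mul_below: "log_unimodular (tri N)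
      (\<lambda>X. if m = n then entry_inv (m, m - 1) (F X)
           else entry_mul (m, m - 1) (m + 1, m - 1) (entry_inv (m, m - 1) (F X)))"
    using m log_unimodular_entry_mul[OF inv finite_tri, of "(m, m - 1)" "(m + 1, m - 1)"] inv
    by (cases "m = n") simp_all
  show ?thesis
    unfolding bmap_eq_entry_ops[OF m(1) True] Let_def
    using m log_unimodular_entry_mul[OF mul_below finite_tri, of "(m, m - 1)" "(m, m - 2)"] mul_below
    by (cases "m = 2") simp_all
qed (use F in \<open>simp add: bmap_def\<close>)

lemma log_unimodular_Rtri:
  assumes F: "log_unimodular (tri N) F" and n: "2 \<le> n" "n \<le> N"
  shows "log_unimodular (tri N) (\<lambda>X. Rtri n (F X))"
proof -
  have rhos: "log_unimodular (tri N) (\<lambda>X. fold (rho n) [1..<n-1] (F X))"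
    using n by (intro log_unimodular_fold[OF _ F] log_unimodular_rho) auto
  have "rmap n = entry_inv (n, n - 1)"
    by (auto simp: rmap_def entry_inv_def fun_eq_iff)
  then have "log_unimodular (tri N) (\<lambda>X. rmap n (fold (rho n) [1..<n-1] (F X)))"
    using log_unimodular_entry_inv[OF rhos finite_tri, of "(n, n - 1)"] n by simp
  then show ?thesis
    unfolding Rtri_def rho_last_def using n
    by (intro log_unimodular_foldr log_unimodular_bmap) auto
qed

section \<open>The recursion for \<open>T\<^sub>n\<close>\<close>

definition row_local :: "nat \<Rightarrow> (tarray \<Rightarrow> tarray) \<Rightarrow> bool" where
  "row_local m F \<longleftrightarrow> (\<forall>X i. m < i \<longrightarrow> F X i = X i) \<and>
     (\<forall>X Y. (\<forall>i\<le>m. X i = Y i) \<longrightarrow> (\<forall>i\<le>m. F X i = F Y i))"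

lemma row_local_id: "row_local m (\<lambda>X. X)"
  unfolding row_local_def by auto

lemma row_local_comp:
  assumes "row_local m F" "row_local m G"
  shows "row_local m (\<lambda>X. G (F X))"
  unfolding row_local_def
proof (intro conjI allI impI)
  fix X Y :: tarray and i assume "\<forall>i\<le>m. X i = Y i" "i \<le> m"
  then have "\<forall>i\<le>m. F X i = F Y i" using assms(1) unfolding row_local_def by blast
  then show "G (F X) i = G (F Y) i" using assms(2) \<open>i \<le> m\<close> unfolding row_local_def by blast
qed (use assms in \<open>simp add: row_local_def\<close>)

lemma row_local_mono:
  assumes F: "row_local m F" and "m \<le> m'"
  shows "row_local m' F"
  unfolding row_local_def
proof (intro conjI allI impI)
  fix X Y :: tarray and i assume XY: "\<forall>i\<le>m'. X i = Y i" and "i \<le> m'"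
  show "F X i = F Y i"
  proof (cases "i \<le> m")
    case True
    then show ?thesis using F XY \<open>m \<le> m'\<close> unfolding row_local_def by simp
  next
    case False
    then show ?thesis using F XY \<open>i \<le> m'\<close> unfolding row_local_def by simp
  qed
qed (use assms in \<open>simp add: row_local_def\<close>)

lemma row_local_foldr:
  "(\<And>k. k \<in> set xs \<Longrightarrow> row_local m (g k)) \<Longrightarrow> row_local m (\<lambda>X. foldr g xs X)"
proof (induction xs)
  case (Cons k xs)
  then have "row_local m (\<lambda>X. g k (foldr g xs X))"
    using row_local_comp[of m "foldr g xs" "g k"] by simp
  then show ?case by simp
qed (simp add: row_local_id[unfolded id_def[symmetric]])

lemma row_local_fold:
  "(\<And>k. k \<in> set xs \<Longrightarrow> row_local m (g k)) \<Longrightarrow> row_local m F \<Longrightarrow> row_local m (\<lambda>X. fold g xs (F X))"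
proof (induction xs arbitrary: F)
  case (Cons k xs)
  then have "row_local m (\<lambda>X. fold g xs (g k (F X)))"
    using row_local_comp[of m F "g k"] by (intro Cons.IH) auto
  then show ?case by simp
qed simp

lemma row_local_pointwise:
  assumes "\<And>X i q. m < i \<Longrightarrow> F X i q = X i q"
    and "\<And>X Y i q. (\<And>p q. p \<le> m \<Longrightarrow> X p q = Y p q) \<Longrightarrow> i \<le> m \<Longrightarrow> F X i q = F Y i q"
  shows "row_local m F"
  unfolding row_local_def
proof (intro conjI allI impI)
  fix X Y :: tarray and i assume "\<forall>i\<le>m. X i = Y i" "i \<le> m"
  then show "F X i = F Y i" by (intro ext assms(2)) auto
qed (simp add: assms(1) fun_eq_iff)

lemma row_local_lmap: "i \<le> m \<Longrightarrow> row_local m (lmap i j)"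
  by (rule row_local_pointwise) (auto simp: lmap_def Let_def)

lemma row_local_rmap: "n \<le> m \<Longrightarrow> row_local m (rmap n)"
  by (rule row_local_pointwise) (auto simp: rmap_def)

lemma row_local_bmap: "k \<le> n \<Longrightarrow> row_local n (bmap n k)"
  by (rule row_local_pointwise) (auto simp: bmap_def)

lemma row_local_Rtri: "row_local n (Rtri n)"
proof -
  have "row_local n (\<lambda>X. fold (rho n) [1..<n-1] X)"
    unfolding rho_def
    by (intro row_local_fold row_local_id row_local_foldr row_local_lmap) auto
  then have "row_local n (\<lambda>X. rmap n (fold (rho n) [1..<n-1] X))"
    using row_local_comp row_local_rmap by blast
  moreover have "row_local n (\<lambda>X. foldr (bmap n) [2..<n+1] X)"
    by (intro row_local_foldr row_local_bmap) auto
  ultimately show ?thesis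
    unfolding Rtri_def rho_last_def using row_local_comp by blast
qed

text \<open>The definition of \<open>Ttri\<close> pads the first \<open>n - 1\<close> rows with ones before applying \<open>T\<^sub>n\<^sub>-\<^sub>1\<close>;
row locality makes the padding invisible.\<close>

lemma row_local_truncate:
  assumes "row_local m F"
  shows "(\<lambda>i j. if i \<le> m then F (\<lambda>p q. if p \<le> m then X p q else 1) i j else X i j) = F X"
  using assms unfolding row_local_def by (fastforce simp: fun_eq_iff)

lemma Ttri_le_2: "n \<le> 2 \<Longrightarrow> Ttri n X = X"
  by (auto simp: le_Suc_eq numeral_2_eq_2)

lemma Ttri_Suc_if_row_local:
  assumes "row_local m (Ttri m)" "2 \<le> m"
  shows "Ttri (Suc m) X = Rtri (Suc m) (Ttri m X)"
proof -
  obtain k where m: "m = k + 2" using assms(2) le_Suc_ex by (metis add.commute)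
  have "Ttri (Suc m) X = Rtri (Suc m)
      (\<lambda>i j. if i \<le> m then Ttri m (\<lambda>p q. if p \<le> m then X p q else 1) i j else X i j)"
    unfolding m by (simp add: eval_nat_numeral)
  also have "\<dots> = Rtri (Suc m) (Ttri m X)"
    by (simp only: row_local_truncate[OF assms(1)])
  finally show ?thesis .
qed

lemma row_local_Ttri: "row_local m (Ttri m)"
proof (induction m)
  case (Suc m)
  show ?case
  proof (cases "2 \<le> m")
    case True
    have "row_local (Suc m) (\<lambda>X. Rtri (Suc m) (Ttri m X))"
      using row_local_comp[OF row_local_mono[OF Suc.IH] row_local_Rtri] by simp
    then show ?thesis
      unfolding Ttri_Suc_if_row_local[OF Suc.IH True, abs_def] .
  next
    case False
    then have "Ttri (Suc m) = (\<lambda>X. X)" by (simp add: Ttri_le_2 fun_eq_iff)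
    then show ?thesis by (simp add: row_local_id)
  qed
qed (simp add: Ttri_le_2 row_local_id)

lemma Ttri_Suc: "2 \<le> m \<Longrightarrow> Ttri (Suc m) X = Rtri (Suc m) (Ttri m X)"
  by (rule Ttri_Suc_if_row_local[OF row_local_Ttri])

lemma log_unimodular_Ttri: "2 \<le> n \<Longrightarrow> n \<le> N \<Longrightarrow> log_unimodular (tri N) (Ttri n)"
proof (induction n rule: dec_induct)
  case base
  then show ?case using log_unimodular_id[OF finite_tri] Ttri_le_2[of 2] by simp
next
  case (step n)
  then show ?case
    using log_unimodular_Rtri[OF step.IH] Ttri_Suc[OF step.hyps(1)] by simp
qed

theorem theorem6p2:
  fixes n :: nat and u :: "nat \<times> nat \<Rightarrow> real"
  assumes "n \<ge> 2"
  shows "\<exists>J :: nat \<times> nat \<Rightarrow> nat \<times> nat \<Rightarrow> real.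
           (\<forall>a\<in>tri n. \<forall>b\<in>tri n.
              ((\<lambda>s. logT n (u(b := s)) a) has_real_derivative J a b) (at (u b)))
         \<and> (det_on (tri n) J = 1 \<or> det_on (tri n) J = -1)"
proof -
  obtain JT where jac: "has_curve_jacobian (log_map (Ttri n)) JT"
    and det: "\<bar>det_on (tri n) (jacobian_matrix JT u)\<bar> = 1"
    using log_unimodular_Ttri[OF assms order_refl] unfolding log_unimodular_def by blast
  have "((\<lambda>s. logT n (u(b := s)) a) has_real_derivative jacobian_matrix JT u a b) (at (u b))" for a b
  proof -
    have "((\<lambda>s. (u(b := s)) c) has_real_derivative (if c = b then 1 else 0)) (at (u b))" for c
      by (auto intro!: derivative_eq_intros)
    from jac[unfolded has_curve_jacobian_def, rule_format,
        of "\<lambda>s. u(b := s)" "\<lambda>c. if c = b then 1 else 0", OF this]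
    have "((\<lambda>s. log_map (Ttri n) (u(b := s)) a) has_real_derivative
        JT u (\<lambda>c. if c = b then 1 else 0) a) (at (u b))"
      by simp
    moreover have "logT n = log_map (Ttri n)"
      by (simp add: logT_def log_map_def fun_eq_iff)
    ultimately show ?thesis
      unfolding jacobian_matrix_def by simp
  qed
  with det show ?thesis by (intro exI[of _ "jacobian_matrix JT u"]) auto
qed

end
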